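(* Let $\Omega\subseteq\mathbb{R}^2$ be a domain and let $f_1,f_2,c_0,c_1,c_2$ be smooth real functions of one variable $r>0$. For $x=(x_1,x_2)\in\Omega$ and $y=(y_1,y_2)\in\mathbb{R}^2\setminus\{0\}$ put $$r=\sqrt{x_1^2+x_2^2},\qquad u=\sqrt{y_1^2+y_2^2},\qquad s=\frac{x_1y_1+x_2y_2}{u},$$ and consider the open set $U=\{(x,y): x\in\Omega,\ y\neq 0,\ r^2-s^2>0\}$, i.e. the set of pairs with $x$ and $y$ linearly independent. On $U$ define $$P=f_1(r)\,s+f_2(r)\sqrt{r^2-s^2},\qquad Q=c_0(r)+c_2(r)s^2+c_1(r)\,s\sqrt{r^2-s^2},$$ and, for $i=1,2$, $$G^i=u\,P\,y_i+u^2\,Q\,x_i .$$ Then the following hold on $U$. (1) The mean Berwald curvature of this spray vanishes identically: $E_{ij}=0$ for all $i,j\in\{1,2\}$. (2) The function $H:=(n+1)(P-sP_s)+(r^2-s^2)(Q_s-sQ_{ss})$ with $n=2$ equals $\dfrac{r^2\bigl(3f_2(r)+r^2c_1(r)\bigr)}{\sqrt{r^2-s^2}}$. In particular, at every point of $U$ with $3f_2(r)+r^2c_1(r)\neq 0$, $H\neq 0$ although $E_{ij}=0$. Consequently, in dimension two the condition $(n+1)(P-sP_s)+(r^2-s^2)(Q_s-sQ_{ss})=0$ is not necessary for the vanishing of the mean Berwald curvature of a spray of the form $G^i=uPy_i+u^2Qx_i$.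
   Context: The square root denotes the nonnegative square root; by the Cauchy–Schwarz inequality $s^2\le r^2$. Here $P,Q$ are regarded as functions of $(r,s)$, and $P_s,Q_s,Q_{ss}$ denote partial derivatives with respect to $s$ at fixed $r$. The functions $G^i(x,y)$ are the coefficients of a spray on $U$, and its mean Berwald curvature is $E_{ij}=\frac12\,\frac{\partial^2}{\partial y_i\,\partial y_j}\Bigl(\sum_{m=1}^2\frac{\partial G^m}{\partial y_m}\Bigr)$, $i,j\in\{1,2\}$. *)

theory Defs
  imports "HOL-Analysis.Analysis"
begin

definition smooth_pos :: "(real \<Rightarrow> real) \<Rightarrow> bool" where
  "smooth_pos f \<longleftrightarrow> (\<forall>k::nat. \<forall>r>0. ((deriv ^^ k) f) differentiable (at r))"

definition sp_r :: "real \<Rightarrow> real \<Rightarrow> real" where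
  "sp_r x1 x2 = sqrt (x1\<^sup>2 + x2\<^sup>2)"

definition sp_u :: "real \<Rightarrow> real \<Rightarrow> real" where
  "sp_u y1 y2 = sqrt (y1\<^sup>2 + y2\<^sup>2)"

definition sp_s :: "real \<Rightarrow> real \<Rightarrow> real \<Rightarrow> real \<Rightarrow> real" where
  "sp_s x1 x2 y1 y2 = (x1 * y1 + x2 * y2) / sp_u y1 y2"

definition Pfun :: "(real \<Rightarrow> real) \<Rightarrow> (real \<Rightarrow> real) \<Rightarrow> real \<Rightarrow> real \<Rightarrow> real" where
  "Pfun f1 f2 r s = f1 r * s + f2 r * sqrt (r\<^sup>2 - s\<^sup>2)"

definition Qfun :: "(real \<Rightarrow> real) \<Rightarrow> (real \<Rightarrow> real) \<Rightarrow> (real \<Rightarrow> real) \<Rightarrow> real \<Rightarrow> real \<Rightarrow> real" where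
  "Qfun c0 c1 c2 r s = c0 r + c2 r * s\<^sup>2 + c1 r * s * sqrt (r\<^sup>2 - s\<^sup>2)"

definition sprayG :: "(real \<Rightarrow> real) \<Rightarrow> (real \<Rightarrow> real) \<Rightarrow> (real \<Rightarrow> real) \<Rightarrow> (real \<Rightarrow> real)
    \<Rightarrow> (real \<Rightarrow> real) \<Rightarrow> nat \<Rightarrow> real \<Rightarrow> real \<Rightarrow> real \<Rightarrow> real \<Rightarrow> real" where
  "sprayG f1 f2 c0 c1 c2 i x1 x2 y1 y2 =
     (let r = sp_r x1 x2; u = sp_u y1 y2; s = sp_s x1 x2 y1 y2;
          P = Pfun f1 f2 r s; Q = Qfun c0 c1 c2 r s
      in u * P * (if i = 1 then y1 else y2) + u\<^sup>2 * Q * (if i = 1 then x1 else x2))"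

definition dy :: "nat \<Rightarrow> (real \<Rightarrow> real \<Rightarrow> real \<Rightarrow> real \<Rightarrow> real) \<Rightarrow> real \<Rightarrow> real \<Rightarrow> real \<Rightarrow> real \<Rightarrow> real" where
  "dy j F x1 x2 y1 y2 =
     (if j = 1 then deriv (\<lambda>t. F x1 x2 t y2) y1 else deriv (\<lambda>t. F x1 x2 y1 t) y2)"

definition mean_berwald :: "(nat \<Rightarrow> real \<Rightarrow> real \<Rightarrow> real \<Rightarrow> real \<Rightarrow> real) \<Rightarrow> nat \<Rightarrow> nat
    \<Rightarrow> real \<Rightarrow> real \<Rightarrow> real \<Rightarrow> real \<Rightarrow> real" where
  "mean_berwald G i j x1 x2 y1 y2 =
     1/2 * dy i (dy j (\<lambda>a b c d. (\<Sum>m\<in>{1,2}. dy m (G m) a b c d))) x1 x2 y1 y2"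

definition Hfun :: "(real \<Rightarrow> real) \<Rightarrow> (real \<Rightarrow> real) \<Rightarrow> (real \<Rightarrow> real) \<Rightarrow> (real \<Rightarrow> real)
    \<Rightarrow> (real \<Rightarrow> real) \<Rightarrow> real \<Rightarrow> real \<Rightarrow> real" where
  "Hfun f1 f2 c0 c1 c2 r s =
     (2 + 1) * (Pfun f1 f2 r s - s * deriv (\<lambda>t. Pfun f1 f2 r t) s)
     + (r\<^sup>2 - s\<^sup>2) * (deriv (\<lambda>t. Qfun c0 c1 c2 r t) s
                      - s * deriv (deriv (\<lambda>t. Qfun c0 c1 c2 r t)) s)"

end

theory Submission
  imports Defs
begin

(* By Lagrange's identity, u * sqrt (r^2 - s^2) = |x1 y2 - x2 y1|, so on each of the two
   open half-planes of y on which the sign of det(x, y) is constant the spray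
   u P y_i + u^2 Q x_i is a cubic polynomial in y with coefficients depending on x only.
   Its y-divergence is then linear in y, so the mean Berwald curvature vanishes.
   The value of H is a direct computation in s: P - s P_s = f2 r^2 / sqrt (r^2 - s^2)
   and Q_s - s Q_ss = c1 r^4 / sqrt (r^2 - s^2)^3. *)

lemma dy_cong_open:
  assumes "open S" and "(t1, t2) \<in> S"
    and "\<And>a b. (a, b) \<in> S \<Longrightarrow> F x1 x2 a b = G x1 x2 a b"
  shows "dy j F x1 x2 t1 t2 = dy j G x1 x2 t1 t2"
proof -
  have "open ((\<lambda>a. (a, t2)) -` S)" "open (Pair t1 -` S)"
    using assms(1) by (auto intro!: open_vimage continuous_intros)
  from eventually_nhds_in_open[OF this(1)] eventually_nhds_in_open[OF this(2)]
  have "eventually (\<lambda>a. (a, t2) \<in> S) (nhds t1)" "eventually (\<lambda>b. (t1, b) \<in> S) (nhds t2)"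
    using assms(2) by simp_all
  then have "eventually (\<lambda>a. F x1 x2 a t2 = G x1 x2 a t2) (nhds t1)"
    and "eventually (\<lambda>b. F x1 x2 t1 b = G x1 x2 t1 b) (nhds t2)"
    using assms(3) by (auto elim: eventually_mono)
  then show ?thesis
    unfolding dy_def by (auto intro: deriv_cong_ev)
qed

lemma dy_affine: "dy j (\<lambda>_ _ a b. K + p * a + q * b) x1 x2 t1 t2 = (if j = 1 then p else q)"
  unfolding dy_def by (auto intro!: DERIV_imp_deriv derivative_eq_intros)

lemma sp_u_mult_sp_s: "sp_u y1 y2 * sp_s x1 x2 y1 y2 = x1 * y1 + x2 * y2"
proof (cases "sp_u y1 y2 = 0")
  case True
  then have "y1 = 0 \<and> y2 = 0" by (simp add: sp_u_def sum_power2_eq_zero_iff)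
  with True show ?thesis by simp
qed (simp add: sp_s_def)

lemma sp_u_mult_sqrt_eq_abs_det:
  "sp_u y1 y2 * sqrt ((sp_r x1 x2)\<^sup>2 - (sp_s x1 x2 y1 y2)\<^sup>2) = \<bar>x1 * y2 - x2 * y1\<bar>"
proof -
  have "sp_u y1 y2 * sqrt ((sp_r x1 x2)\<^sup>2 - (sp_s x1 x2 y1 y2)\<^sup>2)
      = sqrt ((sp_u y1 y2)\<^sup>2 * ((sp_r x1 x2)\<^sup>2 - (sp_s x1 x2 y1 y2)\<^sup>2))"
    by (simp add: real_sqrt_mult sp_u_def)
  also have "(sp_u y1 y2)\<^sup>2 * ((sp_r x1 x2)\<^sup>2 - (sp_s x1 x2 y1 y2)\<^sup>2)
      = (x1\<^sup>2 + x2\<^sup>2) * (y1\<^sup>2 + y2\<^sup>2) - (x1 * y1 + x2 * y2)\<^sup>2"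
    by (simp add: right_diff_distrib power_mult_distrib[symmetric] sp_u_mult_sp_s)
      (simp add: sp_u_def sp_r_def power_mult_distrib)
  also have "\<dots> = (x1 * y2 - x2 * y1)\<^sup>2"
    by algebra
  finally show ?thesis
    by simp
qed

lemma sprayG_eq_abs_det:
  "sprayG f1 f2 c0 c1 c2 i x1 x2 y1 y2 =
     (f1 (sp_r x1 x2) * (x1 * y1 + x2 * y2) + f2 (sp_r x1 x2) * \<bar>x1 * y2 - x2 * y1\<bar>)
       * (if i = 1 then y1 else y2)
   + (c0 (sp_r x1 x2) * (y1\<^sup>2 + y2\<^sup>2) + c2 (sp_r x1 x2) * (x1 * y1 + x2 * y2)\<^sup>2
      + c1 (sp_r x1 x2) * (x1 * y1 + x2 * y2) * \<bar>x1 * y2 - x2 * y1\<bar>)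
       * (if i = 1 then x1 else x2)"
proof -
  define u where "u = sp_u y1 y2"
  define s where "s = sp_s x1 x2 y1 y2"
  define w where "w = sqrt ((sp_r x1 x2)\<^sup>2 - s\<^sup>2)"
  have us: "u * s = x1 * y1 + x2 * y2" and uw: "u * w = \<bar>x1 * y2 - x2 * y1\<bar>"
    unfolding u_def s_def w_def by (rule sp_u_mult_sp_s sp_u_mult_sqrt_eq_abs_det)+
  have u2: "u\<^sup>2 = y1\<^sup>2 + y2\<^sup>2"
    by (simp add: u_def sp_u_def)
  have "sprayG f1 f2 c0 c1 c2 i x1 x2 y1 y2 =
      (f1 (sp_r x1 x2) * (u * s) + f2 (sp_r x1 x2) * (u * w)) * (if i = 1 then y1 else y2)
    + (c0 (sp_r x1 x2) * u\<^sup>2 + c2 (sp_r x1 x2) * (u * s)\<^sup>2 + c1 (sp_r x1 x2) * (u * s) * (u * w))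
      * (if i = 1 then x1 else x2)"
    unfolding sprayG_def Pfun_def Qfun_def Let_def u_def[symmetric] s_def[symmetric] w_def[symmetric]
    by (simp add: algebra_simps power2_eq_square)
  then show ?thesis
    unfolding us uw u2 .
qed

definition cubic_spray :: "real \<Rightarrow> real \<Rightarrow> real \<Rightarrow> real \<Rightarrow> real \<Rightarrow> nat
    \<Rightarrow> real \<Rightarrow> real \<Rightarrow> real \<Rightarrow> real \<Rightarrow> real" where
  "cubic_spray a b e0 e1 e2 i x1 x2 y1 y2 =
     (a * (x1 * y1 + x2 * y2) + b * (x1 * y2 - x2 * y1)) * (if i = 1 then y1 else y2)
   + (e0 * (y1\<^sup>2 + y2\<^sup>2) + e2 * (x1 * y1 + x2 * y2)\<^sup>2
      + e1 * (x1 * y1 + x2 * y2) * (x1 * y2 - x2 * y1)) * (if i = 1 then x1 else x2)"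

lemma cubic_spray_divergence:
  "dy 1 (cubic_spray a b e0 e1 e2 1) x1 x2 y1 y2 + dy 2 (cubic_spray a b e0 e1 e2 2) x1 x2 y1 y2
   = (3 * a + 2 * e0 + 2 * e2 * (x1\<^sup>2 + x2\<^sup>2)) * (x1 * y1 + x2 * y2)
     + (3 * b + e1 * (x1\<^sup>2 + x2\<^sup>2)) * (x1 * y2 - x2 * y1)"
proof -
  define L where "L = x1 * y1 + x2 * y2"
  define M where "M = x1 * y2 - x2 * y1"
  have "((\<lambda>t. cubic_spray a b e0 e1 e2 1 x1 x2 t y2) has_real_derivative
      (a * x1 - b * x2) * y1 + (a * L + b * M)
      + (2 * e0 * y1 + 2 * e2 * L * x1 + e1 * (x1 * M - x2 * L)) * x1) (at y1)"
    unfolding cubic_spray_def L_def M_def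
    by (auto intro!: derivative_eq_intros simp: algebra_simps power2_eq_square)
  moreover have "((\<lambda>t. cubic_spray a b e0 e1 e2 2 x1 x2 y1 t) has_real_derivative
      (a * x2 + b * x1) * y2 + (a * L + b * M)
      + (2 * e0 * y2 + 2 * e2 * L * x2 + e1 * (x2 * M + x1 * L)) * x2) (at y2)"
    unfolding cubic_spray_def L_def M_def
    by (auto intro!: derivative_eq_intros simp: algebra_simps power2_eq_square)
  ultimately show ?thesis
    unfolding dy_def by (simp add: DERIV_imp_deriv L_def M_def algebra_simps power2_eq_square)
qed

lemma mean_berwald_eq_0_if_divergence_affine:
  assumes "open S" and "(y1, y2) \<in> S"
    and "\<And>a b. (a, b) \<in> S \<Longrightarrow> (\<Sum>m\<in>{1,2}. dy m (G m) x1 x2 a b) = K + p * a + q * b"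
  shows "mean_berwald G i j x1 x2 y1 y2 = 0"
proof -
  define D where "D = (\<lambda>x1 x2 y1 y2. \<Sum>m\<in>{1,2}. dy m (G m) x1 x2 y1 y2)"
  have "dy j D x1 x2 a b = dy j (\<lambda>_ _ c d. K + p * c + q * d) x1 x2 a b" if "(a, b) \<in> S" for a b
    using assms(1) that by (rule dy_cong_open) (unfold D_def, erule assms(3))
  then have "dy j D x1 x2 a b = (if j = 1 then p else q)" if "(a, b) \<in> S" for a b
    using that by (simp add: dy_affine)
  then have "dy i (dy j D) x1 x2 y1 y2 = dy i (\<lambda>_ _ _ _. if j = 1 then p else q) x1 x2 y1 y2"
    using assms(1,2) by (rule dy_cong_open[rotated 2])
  then show ?thesis
    unfolding mean_berwald_def D_def[symmetric] by (simp add: dy_def)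
qed

lemma sprayG_eq_cubic_spray:
  assumes "\<bar>\<sigma>\<bar> = 1" and "0 < \<sigma> * (x1 * y2 - x2 * y1)"
  shows "sprayG f1 f2 c0 c1 c2 i x1 x2 y1 y2 =
    cubic_spray (f1 (sp_r x1 x2)) (\<sigma> * f2 (sp_r x1 x2)) (c0 (sp_r x1 x2)) (\<sigma> * c1 (sp_r x1 x2))
      (c2 (sp_r x1 x2)) i x1 x2 y1 y2"
proof -
  have "\<bar>x1 * y2 - x2 * y1\<bar> = \<sigma> * (x1 * y2 - x2 * y1)"
    using assms by (metis abs_mult abs_of_pos mult_1)
  then show ?thesis
    unfolding sprayG_eq_abs_det cubic_spray_def by (simp only:) (simp add: algebra_simps)
qed

lemma mean_berwald_sprayG_eq_0:
  assumes "x1 * y2 - x2 * y1 \<noteq> 0"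
  shows "mean_berwald (sprayG f1 f2 c0 c1 c2) i j x1 x2 y1 y2 = 0"
proof -
  define \<sigma> where "\<sigma> = sgn (x1 * y2 - x2 * y1)"
  define S where "S = {z. 0 < \<sigma> * (x1 * snd z - x2 * fst z)}"
  define r where "r = sp_r x1 x2"
  define \<alpha> where "\<alpha> = 3 * f1 r + 2 * c0 r + 2 * c2 r * (x1\<^sup>2 + x2\<^sup>2)"
  define \<beta> where "\<beta> = \<sigma> * (3 * f2 r + c1 r * (x1\<^sup>2 + x2\<^sup>2))"
  have \<sigma>: "\<bar>\<sigma>\<bar> = 1"
    using assms by (simp add: \<sigma>_def abs_sgn_eq)
  have "open S"
    unfolding S_def by (intro open_Collect_less continuous_intros)
  moreover have "(y1, y2) \<in> S"
    using assms by (simp add: S_def \<sigma>_def sgn_if)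
  moreover have "(\<Sum>m\<in>{1,2}. dy m (sprayG f1 f2 c0 c1 c2 m) x1 x2 a b)
      = 0 + (\<alpha> * x1 - \<beta> * x2) * a + (\<alpha> * x2 + \<beta> * x1) * b" if "(a, b) \<in> S" for a b
  proof -
    have "dy m (sprayG f1 f2 c0 c1 c2 m) x1 x2 a b
        = dy m (cubic_spray (f1 r) (\<sigma> * f2 r) (c0 r) (\<sigma> * c1 r) (c2 r) m) x1 x2 a b" for m
      using \<open>open S\<close> that by (rule dy_cong_open) (simp add: S_def r_def sprayG_eq_cubic_spray[OF \<sigma>])
    then have "(\<Sum>m\<in>{1,2}. dy m (sprayG f1 f2 c0 c1 c2 m) x1 x2 a b)
        = dy 1 (cubic_spray (f1 r) (\<sigma> * f2 r) (c0 r) (\<sigma> * c1 r) (c2 r) 1) x1 x2 a b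
          + dy 2 (cubic_spray (f1 r) (\<sigma> * f2 r) (c0 r) (\<sigma> * c1 r) (c2 r) 2) x1 x2 a b"
      by simp
    then show ?thesis
      unfolding cubic_spray_divergence by (simp add: \<alpha>_def \<beta>_def algebra_simps)
  qed
  ultimately show ?thesis
    by (rule mean_berwald_eq_0_if_divergence_affine)
qed

lemma has_real_derivative_sqrt_diff_square:
  assumes "0 < r\<^sup>2 - t\<^sup>2"
  shows "((\<lambda>t. sqrt (r\<^sup>2 - t\<^sup>2)) has_real_derivative - t / sqrt (r\<^sup>2 - t\<^sup>2)) (at t)"
  using assms by (auto intro!: derivative_eq_intros simp: field_simps)

lemma Pfun_has_derivative:
  assumes "0 < r\<^sup>2 - s\<^sup>2"
  shows "((\<lambda>t. Pfun f1 f2 r t) has_real_derivative f1 r - f2 r * s / sqrt (r\<^sup>2 - s\<^sup>2)) (at s)"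
  unfolding Pfun_def
  by (rule derivative_eq_intros has_real_derivative_sqrt_diff_square assms refl)+ simp

lemma Qfun_has_derivative:
  assumes "0 < r\<^sup>2 - s\<^sup>2"
  shows "((\<lambda>t. Qfun c0 c1 c2 r t) has_real_derivative
           2 * c2 r * s + c1 r * (r\<^sup>2 - 2 * s\<^sup>2) / sqrt (r\<^sup>2 - s\<^sup>2)) (at s)"
  unfolding Qfun_def
  by (rule derivative_eq_intros has_real_derivative_sqrt_diff_square assms refl)+
    (use assms in \<open>simp add: field_simps power2_eq_square\<close>)

lemma Qfun_second_deriv:
  assumes "0 < r\<^sup>2 - s\<^sup>2"
  shows "deriv (deriv (\<lambda>t. Qfun c0 c1 c2 r t)) s
           = 2 * c2 r + c1 r * s * (2 * s\<^sup>2 - 3 * r\<^sup>2) / sqrt (r\<^sup>2 - s\<^sup>2) ^ 3"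
proof -
  define Q' where "Q' t = 2 * c2 r * t + c1 r * (r\<^sup>2 - 2 * t\<^sup>2) / sqrt (r\<^sup>2 - t\<^sup>2)" for t
  have "open {t. 0 < r\<^sup>2 - t\<^sup>2}"
    by (intro open_Collect_less continuous_intros)
  then have "eventually (\<lambda>t. 0 < r\<^sup>2 - t\<^sup>2) (nhds s)"
    using assms eventually_nhds_in_open by fastforce
  then have "eventually (\<lambda>t. deriv (\<lambda>t. Qfun c0 c1 c2 r t) t = Q' t) (nhds s)"
    by (rule eventually_mono) (simp add: Q'_def DERIV_imp_deriv[OF Qfun_has_derivative])
  then have "deriv (deriv (\<lambda>t. Qfun c0 c1 c2 r t)) s = deriv Q' s"
    by (rule deriv_cong_ev) simp
  also have "\<dots> = 2 * c2 r + c1 r * s * (2 * s\<^sup>2 - 3 * r\<^sup>2) / sqrt (r\<^sup>2 - s\<^sup>2) ^ 3"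
  proof (rule DERIV_imp_deriv)
    have "sqrt (r\<^sup>2 - s\<^sup>2) \<noteq> 0"
      using assms by simp
    show "(Q' has_real_derivative
        2 * c2 r + c1 r * s * (2 * s\<^sup>2 - 3 * r\<^sup>2) / sqrt (r\<^sup>2 - s\<^sup>2) ^ 3) (at s)"
      unfolding Q'_def
      by (rule derivative_eq_intros has_real_derivative_sqrt_diff_square assms refl
          \<open>sqrt (r\<^sup>2 - s\<^sup>2) \<noteq> 0\<close>)+
        (use assms in \<open>simp add: field_simps power2_eq_square power3_eq_cube\<close>)
  qed
  finally show ?thesis .
qed

lemma Hfun_eq:
  assumes "0 < r\<^sup>2 - s\<^sup>2"
  shows "Hfun f1 f2 c0 c1 c2 r s = r\<^sup>2 * (3 * f2 r + r\<^sup>2 * c1 r) / sqrt (r\<^sup>2 - s\<^sup>2)"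
proof -
  define w where "w = sqrt (r\<^sup>2 - s\<^sup>2)"
  have "w > 0" and r2: "r\<^sup>2 = w\<^sup>2 + s\<^sup>2"
    using assms by (simp_all add: w_def)
  have P_s: "deriv (\<lambda>t. Pfun f1 f2 r t) s = f1 r - f2 r * s / w"
    unfolding w_def using assms by (rule DERIV_imp_deriv[OF Pfun_has_derivative])
  have Q_s: "deriv (\<lambda>t. Qfun c0 c1 c2 r t) s = 2 * c2 r * s + c1 r * (r\<^sup>2 - 2 * s\<^sup>2) / w"
    unfolding w_def using assms by (rule DERIV_imp_deriv[OF Qfun_has_derivative])
  have Q_ss: "deriv (deriv (\<lambda>t. Qfun c0 c1 c2 r t)) s
      = 2 * c2 r + c1 r * s * (2 * s\<^sup>2 - 3 * r\<^sup>2) / w ^ 3"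
    unfolding w_def using assms by (rule Qfun_second_deriv)
  have "Pfun f1 f2 r s - s * deriv (\<lambda>t. Pfun f1 f2 r t) s = f2 r * r\<^sup>2 / w"
    using \<open>w > 0\<close> unfolding P_s unfolding Pfun_def w_def[symmetric] r2
    by (simp add: field_simps power2_eq_square)
  moreover have "deriv (\<lambda>t. Qfun c0 c1 c2 r t) s - s * deriv (deriv (\<lambda>t. Qfun c0 c1 c2 r t)) s
      = c1 r * r\<^sup>2 * r\<^sup>2 / w ^ 3"
    using \<open>w > 0\<close> unfolding Q_s Q_ss r2
    by (simp add: field_simps power2_eq_square power3_eq_cube)
  ultimately show ?thesis
    using \<open>w > 0\<close> unfolding Hfun_def w_def[symmetric] r2
    by (simp add: field_simps power2_eq_square power3_eq_cube)
qed

theorem mainTheorem1: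
  fixes \<Omega> :: "(real \<times> real) set"
    and f1 f2 c0 c1 c2 :: "real \<Rightarrow> real"
    and x1 x2 y1 y2 :: real
  assumes "open \<Omega>" and "connected \<Omega>"
    and "smooth_pos f1" "smooth_pos f2" "smooth_pos c0" "smooth_pos c1" "smooth_pos c2"
    and "(x1, x2) \<in> \<Omega>" and "(y1, y2) \<noteq> (0, 0)"
    and "(sp_r x1 x2)\<^sup>2 - (sp_s x1 x2 y1 y2)\<^sup>2 > 0"
  shows "(\<forall>i\<in>{1,2}. \<forall>j\<in>{1,2}.
            mean_berwald (sprayG f1 f2 c0 c1 c2) i j x1 x2 y1 y2 = 0)
       \<and> Hfun f1 f2 c0 c1 c2 (sp_r x1 x2) (sp_s x1 x2 y1 y2)
           = (sp_r x1 x2)\<^sup>2 * (3 * f2 (sp_r x1 x2) + (sp_r x1 x2)\<^sup>2 * c1 (sp_r x1 x2))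
             / sqrt ((sp_r x1 x2)\<^sup>2 - (sp_s x1 x2 y1 y2)\<^sup>2)
       \<and> (3 * f2 (sp_r x1 x2) + (sp_r x1 x2)\<^sup>2 * c1 (sp_r x1 x2) \<noteq> 0 \<longrightarrow>
            Hfun f1 f2 c0 c1 c2 (sp_r x1 x2) (sp_s x1 x2 y1 y2) \<noteq> 0
            \<and> (\<forall>i\<in>{1,2}. \<forall>j\<in>{1,2}. mean_berwald (sprayG f1 f2 c0 c1 c2) i j x1 x2 y1 y2 = 0))"
proof -
  \<comment> \<open>Only y-derivatives at fixed x and s-derivatives at fixed r occur.\<close>
  have "sp_u y1 y2 > 0"
    using assms(9) by (simp add: sp_u_def sum_power2_gt_zero_iff)
  moreover have "sqrt ((sp_r x1 x2)\<^sup>2 - (sp_s x1 x2 y1 y2)\<^sup>2) > 0"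
    using assms(10) by simp
  ultimately have "x1 * y2 - x2 * y1 \<noteq> 0"
    using sp_u_mult_sqrt_eq_abs_det[of y1 y2 x1 x2] by force
  then have E: "mean_berwald (sprayG f1 f2 c0 c1 c2) i j x1 x2 y1 y2 = 0" for i j
    by (rule mean_berwald_sprayG_eq_0)
  have "(sp_r x1 x2)\<^sup>2 > 0"
    using assms(10) zero_le_power2[of "sp_s x1 x2 y1 y2"] by linarith
  with assms(10) E Hfun_eq[OF assms(10)] show ?thesis
    by auto
qed

end
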